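(* A finite groupoid $\langle A;\cdot\rangle$ with an identity element is an Abelian algebra if and only if it is a commutative group.
   Context: A groupoid is an algebra $\langle A;\cdot\rangle$ with one binary operation; an identity element is $1\in A$ with $1\cdot a=a\cdot 1=a$ for all $a$. A polynomial operation of an algebra is an operation obtained from a term by substituting elements of the algebra for some of its variables. An algebra is called Abelian if for every polynomial operation $t(x,y_1,\ldots,y_n)$ and all elements $u,v,c_1,\ldots,c_n,d_1,\ldots,d_n$ of the algebra, $t(u,c_1,\ldots,c_n)=t(u,d_1,\ldots,d_n)$ implies $t(v,c_1,\ldots,c_n)=t(v,d_1,\ldots,d_n)$. *)

theory Defs
  imports "HOL-Algebra.Group"
begin

text \<open>Terms of the groupoid signature (one binary operation) over variables
  indexed by natural numbers, with constants (elements of the algebra)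
  allowed; these represent polynomial operations.\<close>

datatype 'a gterm = Var nat | Const 'a | Mul "'a gterm" "'a gterm"

primrec geval :: "('a \<Rightarrow> 'a \<Rightarrow> 'a) \<Rightarrow> (nat \<Rightarrow> 'a) \<Rightarrow> 'a gterm \<Rightarrow> 'a" where
  "geval f env (Var i) = env i"
| "geval f env (Const a) = a"
| "geval f env (Mul s t) = f (geval f env s) (geval f env t)"

primrec gconsts :: "'a gterm \<Rightarrow> 'a set" where
  "gconsts (Var i) = {}"
| "gconsts (Const a) = {a}"
| "gconsts (Mul s t) = gconsts s \<union> gconsts t"

definition groupoid :: "'a set \<Rightarrow> ('a \<Rightarrow> 'a \<Rightarrow> 'a) \<Rightarrow> bool" where
  "groupoid A f \<longleftrightarrow> (\<forall>a\<in>A. \<forall>b\<in>A. f a b \<in> A)"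

definition is_identity :: "'a set \<Rightarrow> ('a \<Rightarrow> 'a \<Rightarrow> 'a) \<Rightarrow> 'a \<Rightarrow> bool" where
  "is_identity A f e \<longleftrightarrow> e \<in> A \<and> (\<forall>a\<in>A. f e a = a \<and> f a e = a)"

text \<open>Abelian algebra: for every polynomial operation t(x, y_1, ...), with x
  the variable 0 and the remaining variables the y's, and all elements
  u, v, c, d of A: t(u, c) = t(u, d) implies t(v, c) = t(v, d).\<close>
definition abelian_groupoid :: "'a set \<Rightarrow> ('a \<Rightarrow> 'a \<Rightarrow> 'a) \<Rightarrow> bool" where
  "abelian_groupoid A f \<longleftrightarrow>
     (\<forall>t. gconsts t \<subseteq> A \<longrightarrow>
        (\<forall>u\<in>A. \<forall>v\<in>A. \<forall>c d. (\<forall>i. c i \<in> A) \<longrightarrow> (\<forall>i. d i \<in> A) \<longrightarrow>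
           geval f (c(0 := u)) t = geval f (d(0 := u)) t \<longrightarrow>
           geval f (c(0 := v)) t = geval f (d(0 := v)) t))"

end

theory Submission
  imports Defs
begin

text \<open>In a commutative group a polynomial operation t(x, y) factors as x^n \<cdot> t(1, y),
  where n counts the occurrences of x; cancelling x^n shows that t(u, c) = t(u, d)
  does not depend on u. Conversely, in an Abelian groupoid with identity e, each
  group law is obtained from one polynomial operation whose values agree at x = e,
  and therefore agree everywhere: (y1 x) y2 yields commutativity and associativity,
  x y1 yields cancellation, and a finite cancellative groupoid has inverses.\<close>

lemma abelian_groupoidD:
  assumes "abelian_groupoid A f" "gconsts t \<subseteq> A" "u \<in> A" "v \<in> A"
    "\<forall>i. c i \<in> A" "\<forall>i. d i \<in> A"
    "geval f (c(0 := u)) t = geval f (d(0 := u)) t"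
  shows "geval f (c(0 := v)) t = geval f (d(0 := v)) t"
  using assms unfolding abelian_groupoid_def by blast

lemma geval_closed:
  assumes "groupoid A f" "gconsts t \<subseteq> A" "\<forall>i. env i \<in> A"
  shows "geval f env t \<in> A"
  using assms(2) by (induction t) (use assms(1,3) in \<open>auto simp: groupoid_def\<close>)

primrec var0_count :: "'a gterm \<Rightarrow> nat" where
  "var0_count (Var i) = (if i = 0 then 1 else 0)"
| "var0_count (Const a) = 0"
| "var0_count (Mul s t) = var0_count s + var0_count t"

lemma (in comm_monoid) geval_update_0:
  assumes "gconsts t \<subseteq> carrier G" "\<forall>i. c i \<in> carrier G" "u \<in> carrier G"
  shows "geval (\<otimes>) (c(0 := u)) t = u [^] var0_count t \<otimes> geval (\<otimes>) (c(0 := \<one>)) t"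
  using assms(1)
proof (induction t)
  case (Mul s t)
  let ?g = "geval (\<otimes>) (c(0 := \<one>))"
  have "?g s \<in> carrier G" "?g t \<in> carrier G"
    using Mul.prems assms(2) by (auto intro!: geval_closed simp: groupoid_def)
  with Mul assms(3) show ?case
    by (simp del: fun_upd_apply add: nat_pow_mult[symmetric] m_ac)
qed (use assms in auto)

lemma (in comm_group) abelian_groupoid: "abelian_groupoid (carrier G) (\<otimes>)"
  unfolding abelian_groupoid_def
proof (intro allI impI ballI)
  fix t u v c d
  assume t: "gconsts t \<subseteq> carrier G" and u: "u \<in> carrier G" and v: "v \<in> carrier G"
    and c: "\<forall>i. c i \<in> carrier G" and d: "\<forall>i. d i \<in> carrier G"
    and eq: "geval (\<otimes>) (c(0 := u)) t = geval (\<otimes>) (d(0 := u)) t"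
  have closed: "geval (\<otimes>) (env(0 := \<one>)) t \<in> carrier G" if "\<forall>i. env i \<in> carrier G" for env
    by (rule geval_closed[OF _ t]) (use that in \<open>auto simp: groupoid_def\<close>)
  have "geval (\<otimes>) (c(0 := \<one>)) t = geval (\<otimes>) (d(0 := \<one>)) t"
    using eq closed[OF c] closed[OF d] u
    by (simp add: geval_update_0[OF t c u] geval_update_0[OF t d u])
  then show "geval (\<otimes>) (c(0 := v)) t = geval (\<otimes>) (d(0 := v)) t"
    by (simp add: geval_update_0[OF t c v] geval_update_0[OF t d v])
qed

context
  fixes A :: "'a set" and f :: "'a \<Rightarrow> 'a \<Rightarrow> 'a" and e :: 'a
  assumes abelian: "abelian_groupoid A f"
    and closed: "groupoid A f"
    and identity: "is_identity A f e"
begin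

private lemma identity_in: "e \<in> A"
  and identity_left: "x \<in> A \<Longrightarrow> f e x = x"
  and identity_right: "x \<in> A \<Longrightarrow> f x e = x"
  using identity unfolding is_identity_def by auto

private abbreviation env :: "'a \<Rightarrow> 'a \<Rightarrow> nat \<Rightarrow> 'a" where
  "env a b \<equiv> (\<lambda>_. e)(1 := a, 2 := b)"

private lemma env_in: "a \<in> A \<Longrightarrow> b \<in> A \<Longrightarrow> \<forall>i. env a b i \<in> A"
  using identity_in by auto

lemma abelian_groupoid_commute:
  assumes a: "a \<in> A" and b: "b \<in> A"
  shows "f a b = f b a"
proof -
  let ?t = "Mul (Mul (Var 1) (Var 0)) (Var 2)"
  have "geval f ((env e a)(0 := b)) ?t = geval f ((env a e)(0 := b)) ?t"
    by (rule abelian_groupoidD[OF abelian _ identity_in b env_in env_in])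
      (auto simp: a b identity_in identity_left identity_right)
  then show ?thesis
    using a b closed by (simp add: identity_left identity_right groupoid_def)
qed

lemma abelian_groupoid_assoc:
  assumes a: "a \<in> A" and b: "b \<in> A" and c: "c \<in> A"
  shows "f (f a b) c = f a (f b c)"
proof -
  let ?t = "Mul (Mul (Var 1) (Var 0)) (Var 2)"
  have "geval f ((env a c)(0 := b)) ?t = geval f ((env c a)(0 := b)) ?t"
    by (rule abelian_groupoidD[OF abelian _ identity_in b env_in env_in])
      (auto simp: a c identity_in identity_right abelian_groupoid_commute)
  then have "f (f a b) c = f (f c b) a" by simp
  also have "\<dots> = f a (f b c)"
    using a b c closed by (metis abelian_groupoid_commute groupoid_def)
  finally show ?thesis .
qed

lemma abelian_groupoid_left_cancel:
  assumes a: "a \<in> A" and b: "b \<in> A" and c: "c \<in> A" and eq: "f a b = f a c"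
  shows "b = c"
proof -
  let ?t = "Mul (Var 0) (Var 1)"
  have "geval f ((env b e)(0 := e)) ?t = geval f ((env c e)(0 := e)) ?t"
    by (rule abelian_groupoidD[OF abelian _ a identity_in env_in env_in])
      (auto simp: a b c identity_in eq)
  then show ?thesis by (simp add: identity_left b c)
qed

end

lemma finite_left_cancel_right_inverse:
  assumes "finite A" "groupoid A f" "e \<in> A" "x \<in> A"
    and cancel: "\<And>b c. b \<in> A \<Longrightarrow> c \<in> A \<Longrightarrow> f x b = f x c \<Longrightarrow> b = c"
  shows "\<exists>y\<in>A. f x y = e"
proof -
  have "inj_on (f x) A" by (rule inj_onI) (rule cancel)
  moreover have "f x ` A \<subseteq> A" using assms(2,4) unfolding groupoid_def by auto
  ultimately have "f x ` A = A" using endo_inj_surj[OF assms(1)] by blast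
  then show ?thesis using assms(3) by (metis imageE)
qed

theorem mainTheorem2:
  fixes A :: "'a set" and f :: "'a \<Rightarrow> 'a \<Rightarrow> 'a" and e :: 'a
  assumes "finite A" and "groupoid A f" and "is_identity A f e"
  shows "abelian_groupoid A f \<longleftrightarrow> comm_group \<lparr>carrier = A, mult = f, one = e\<rparr>"
proof
  assume "comm_group \<lparr>carrier = A, mult = f, one = e\<rparr>"
  then show "abelian_groupoid A f" using comm_group.abelian_groupoid by fastforce
next
  assume ab: "abelian_groupoid A f"
  have closed: "\<And>x y. x \<in> A \<Longrightarrow> y \<in> A \<Longrightarrow> f x y \<in> A"
    and e: "e \<in> A" "\<And>x. x \<in> A \<Longrightarrow> f e x = x"
    using assms(2,3) unfolding groupoid_def is_identity_def by auto
  note commute = abelian_groupoid_commute[OF ab assms(2,3)]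
  have inverse: "\<exists>y\<in>A. f y x = e" if "x \<in> A" for x
    using finite_left_cancel_right_inverse[OF assms(1,2) e(1) that
        abelian_groupoid_left_cancel[OF ab assms(2,3) that]] commute that by metis
  show "comm_group \<lparr>carrier = A, mult = f, one = e\<rparr>"
  proof (rule comm_groupI)
    fix x y
    assume "x \<in> carrier \<lparr>carrier = A, mult = f, one = e\<rparr>"
      "y \<in> carrier \<lparr>carrier = A, mult = f, one = e\<rparr>"
    then show "x \<otimes>\<^bsub>\<lparr>carrier = A, mult = f, one = e\<rparr>\<^esub> y = y \<otimes>\<^bsub>\<lparr>carrier = A, mult = f, one = e\<rparr>\<^esub> x"
      by (simp add: commute)
  qed (simp_all add: closed e inverse abelian_groupoid_assoc[OF ab assms(2,3)])
qed

end
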